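(* Let $n,p\ge1$ be integers, let $\mathbf{A}^{p+1}_{n+1}$ be as defined in the context, and let $t_{np}(x)=(n+1).x^{\max\{n+1,p\}}$. Then: (a) for every $a\in A$, $t_{np}(a)\vee\sim t_{np}(a)=\top$ (i.e. $\mathbf{A}^{p+1}_{n+1}\models t_{np}(x)\vee\neg t_{np}(x)\approx\top$); (b) $\mathrm{Rad}(\mathbf{A}^{p+1}_{n+1})=\{a\in A: t_{np}(a)=\top\}=\{a\in A:\ (n+1).a^k=\top\text{ for every integer }k>0\}$; (c) for every integer $k>0$ and every $a\in A$, $(n+1).\big(a\vee\sim(a^p)\big)^k=\top$.
   Context: Order $\mathbb{Z}\times\mathbb{Z}$ lexicographically: $(m,r)\preccurlyeq(k,s)$ iff $m<k$, or $m=k$ and $r\le s$; addition/subtraction of pairs is componentwise, and $\min,\max$ of pairs refer to $\preccurlyeq$. For an integer $n\ge1$ let $L^\omega_{n+1}=\{(m,r)\in\mathbb{Z}^2:(0,0)\preccurlyeq(m,r)\preccurlyeq(n,0)\}$ with $x\ast y=\max\{(0,0),x+y-(n,0)\}$ and $x\to y=\min\{(n,0),(n,0)-x+y\}$. For an integer $p\ge1$ let $L_{p+1}=\{0,1,\dots,p\}$ with $\alpha\ast\beta=\max\{0,\alpha+\beta-p\}$. Define $$A=A^{p+1}_{n+1}=\{\langle(m,r),\alpha\rangle:(m,r)\in L^\omega_{n+1},\ \alpha\in\{0,p\}\}\cup\{\langle(m,r),\alpha\rangle:(0,0)\preccurlyeq(m,r)\preccurlyeq(n-1,0),\ 0<\alpha<p\}.$$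 Order: $\langle(m,r),\alpha\rangle\le\langle(k,s),\beta\rangle$ iff one of: (o1) $\alpha\neq0$, $\alpha\le\beta$ and $(m,r)\preccurlyeq(k,s)$; (o2) $\alpha=\beta=0$ and $(k,s)\preccurlyeq(m,r)$; (o3) $\alpha=0$, $\beta\ne0$ and $(n-1,0)\preccurlyeq(m+k,r+s)$. $\wedge,\vee$ denote meet and join for $\le$. Put $\bot=\langle(n,0),0\rangle$, $\top=\langle(n,0),p\rangle$. For $a=\langle(m,r),\alpha\rangle$, $b=\langle(k,s),\beta\rangle\in A$ define $a\odot b$ by: (P1) if $\alpha,\beta\ge1$ and $\alpha+\beta>p$: $a\odot b=\langle(m,r)\ast(k,s),\alpha+\beta-p\rangle$; (P2) if $\alpha,\beta\ge1$ and $\alpha+\beta\le p$: $a\odot b=\langle\min\{(n,0),(2n-(m+k+1),-(r+s))\},0\rangle$; (P3) if $\alpha\ge1$, $\beta=0$: $a\odot b=\langle(m,r)\to(k,s),0\rangle$, and if $\alpha=0$, $\beta\ge1$: $a\odot b=\langle(k,s)\to(m,r),0\rangle$; (P4) if $\alpha=\beta=0$: $a\odot b=\langle\min\{(n,0),(m+k+1,r+s)\},0\rangle$. Define $\sim\langle(m,r),\alpha\rangle=\langle(m,r),p-\alpha\rangle$ if $\alpha\in\{0,p\}$, and $\sim\langle(m,r),\alpha\rangle=\langle(n-1-m,-r),p-\alpha\rangle$ if $0<\alpha<p$. Define $a\Rightarrow b=\sim(a\odot\sim b)$ (so $\sim a=a\Rightarrow\bot$, interpreting $\neg x=x\to\bot$).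 The algebra $\mathbf{A}^{p+1}_{n+1}$ is $\langle A;\odot,\Rightarrow,\wedge,\vee,\bot,\top\rangle$. Terms: $a^0=\top$, $a^{k+1}=a\odot a^k$; $a\oplus b=\sim(\sim a\odot\sim b)$; $0.a=\bot$, $(k+1).a=a\oplus k.a$. $\mathrm{Rad}$ is the intersection of all maximal proper implicative filters, where an implicative filter is a subset containing $\top$, closed under $\odot$ and upward closed. *)

theory Defs
  imports Main
begin

text \<open>Pairs in Z x Z with lexicographic order; elements of A are ((m,r),alpha).
  Parameters n p are natural numbers (the paper's integers n,p >= 1).\<close>

type_synonym zz = "int \<times> int"
type_synonym elt = "zz \<times> int"

definition lex_le :: "zz \<Rightarrow> zz \<Rightarrow> bool" where
  "lex_le x y \<longleftrightarrow> fst x < fst y \<or> (fst x = fst y \<and> snd x \<le> snd y)"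

definition lmin :: "zz \<Rightarrow> zz \<Rightarrow> zz" where
  "lmin x y = (if lex_le x y then x else y)"

definition lmax :: "zz \<Rightarrow> zz \<Rightarrow> zz" where
  "lmax x y = (if lex_le x y then y else x)"

definition zadd :: "zz \<Rightarrow> zz \<Rightarrow> zz" where
  "zadd x y = (fst x + fst y, snd x + snd y)"

definition zsub :: "zz \<Rightarrow> zz \<Rightarrow> zz" where
  "zsub x y = (fst x - fst y, snd x - snd y)"

definition Lw_star :: "nat \<Rightarrow> zz \<Rightarrow> zz \<Rightarrow> zz" where
  "Lw_star n x y = lmax (0,0) (zsub (zadd x y) (int n, 0))"

definition Lw_impl :: "nat \<Rightarrow> zz \<Rightarrow> zz \<Rightarrow> zz" where
  "Lw_impl n x y = lmin (int n, 0) (zadd (zsub (int n, 0) x) y)"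

definition Lw :: "nat \<Rightarrow> zz set" where
  "Lw n = {x. lex_le (0,0) x \<and> lex_le x (int n, 0)}"

definition Acar :: "nat \<Rightarrow> nat \<Rightarrow> elt set" where
  "Acar n p = {(x, \<alpha>). x \<in> Lw n \<and> (\<alpha> = 0 \<or> \<alpha> = int p)}
     \<union> {(x, \<alpha>). lex_le (0,0) x \<and> lex_le x (int n - 1, 0) \<and> 0 < \<alpha> \<and> \<alpha> < int p}"

definition Ale :: "nat \<Rightarrow> nat \<Rightarrow> elt \<Rightarrow> elt \<Rightarrow> bool" where
  "Ale n p a b \<longleftrightarrow>
     (case a of (x, \<alpha>) \<Rightarrow> case b of (y, \<beta>) \<Rightarrow>
       (\<alpha> \<noteq> 0 \<and> \<alpha> \<le> \<beta> \<and> lex_le x y)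
     \<or> (\<alpha> = 0 \<and> \<beta> = 0 \<and> lex_le y x)
     \<or> (\<alpha> = 0 \<and> \<beta> \<noteq> 0 \<and> lex_le (int n - 1, 0) (zadd x y)))"

definition Ajoin :: "nat \<Rightarrow> nat \<Rightarrow> elt \<Rightarrow> elt \<Rightarrow> elt" where
  "Ajoin n p a b = (THE c. c \<in> Acar n p \<and> Ale n p a c \<and> Ale n p b c \<and>
      (\<forall>d\<in>Acar n p. Ale n p a d \<and> Ale n p b d \<longrightarrow> Ale n p c d))"

definition Abot :: "nat \<Rightarrow> nat \<Rightarrow> elt" where
  "Abot n p = ((int n, 0), 0)"

definition Atop :: "nat \<Rightarrow> nat \<Rightarrow> elt" where
  "Atop n p = ((int n, 0), int p)"

definition Aodot :: "nat \<Rightarrow> nat \<Rightarrow> elt \<Rightarrow> elt \<Rightarrow> elt" where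
  "Aodot n p a b =
     (case a of ((m, r), \<alpha>) \<Rightarrow> case b of ((k, s), \<beta>) \<Rightarrow>
       if 1 \<le> \<alpha> \<and> 1 \<le> \<beta> \<and> \<alpha> + \<beta> > int p then
         (Lw_star n (m, r) (k, s), \<alpha> + \<beta> - int p)
       else if 1 \<le> \<alpha> \<and> 1 \<le> \<beta> then
         (lmin (int n, 0) (2 * int n - (m + k + 1), - (r + s)), 0)
       else if 1 \<le> \<alpha> \<and> \<beta> = 0 then
         (Lw_impl n (m, r) (k, s), 0)
       else if \<alpha> = 0 \<and> 1 \<le> \<beta> then
         (Lw_impl n (k, s) (m, r), 0)
       else
         (lmin (int n, 0) (m + k + 1, r + s), 0))"

definition Aneg :: "nat \<Rightarrow> nat \<Rightarrow> elt \<Rightarrow> elt" where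
  "Aneg n p a =
     (case a of ((m, r), \<alpha>) \<Rightarrow>
       if \<alpha> = 0 \<or> \<alpha> = int p then ((m, r), int p - \<alpha>)
       else ((int n - 1 - m, - r), int p - \<alpha>))"

definition Aimp :: "nat \<Rightarrow> nat \<Rightarrow> elt \<Rightarrow> elt \<Rightarrow> elt" where
  "Aimp n p a b = Aneg n p (Aodot n p a (Aneg n p b))"

primrec Apow :: "nat \<Rightarrow> nat \<Rightarrow> elt \<Rightarrow> nat \<Rightarrow> elt" where
  "Apow n p a 0 = Atop n p"
| "Apow n p a (Suc k) = Aodot n p a (Apow n p a k)"

definition Aoplus :: "nat \<Rightarrow> nat \<Rightarrow> elt \<Rightarrow> elt \<Rightarrow> elt" where
  "Aoplus n p a b = Aneg n p (Aodot n p (Aneg n p a) (Aneg n p b))"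

primrec Atimes :: "nat \<Rightarrow> nat \<Rightarrow> nat \<Rightarrow> elt \<Rightarrow> elt" where
  "Atimes n p 0 a = Abot n p"
| "Atimes n p (Suc k) a = Aoplus n p a (Atimes n p k a)"

definition t_np :: "nat \<Rightarrow> nat \<Rightarrow> elt \<Rightarrow> elt" where
  "t_np n p a = Atimes n p (n + 1) (Apow n p a (max (n + 1) p))"

definition impl_filter :: "nat \<Rightarrow> nat \<Rightarrow> elt set \<Rightarrow> bool" where
  "impl_filter n p F \<longleftrightarrow> F \<subseteq> Acar n p \<and> Atop n p \<in> F \<and>
     (\<forall>a\<in>F. \<forall>b\<in>F. Aodot n p a b \<in> F) \<and>
     (\<forall>a\<in>F. \<forall>b\<in>Acar n p. Ale n p a b \<longrightarrow> b \<in> F)"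

definition max_filter :: "nat \<Rightarrow> nat \<Rightarrow> elt set \<Rightarrow> bool" where
  "max_filter n p F \<longleftrightarrow> impl_filter n p F \<and> F \<noteq> Acar n p \<and>
     (\<forall>G. impl_filter n p G \<and> G \<noteq> Acar n p \<and> F \<subseteq> G \<longrightarrow> G = F)"

definition Rad :: "nat \<Rightarrow> nat \<Rightarrow> elt set" where
  "Rad n p = {a \<in> Acar n p. \<forall>F. max_filter n p F \<longrightarrow> a \<in> F}"

end

theory Submission
  imports Defs "HOL-Library.Product_Lexorder"
begin

text \<open>
  Let \<open>T\<close> be the top layer \<open>{(x, p)}\<close>. It is closed under \<open>\<odot>\<close> and upward closed, hence an
  implicative filter. Every \<open>a \<notin> T\<close> satisfies \<open>a\<^sup>k = \<bottom>\<close> for \<open>k \<ge> max (n + 1) p\<close>: each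
  factor lowers the layer by the deficiency \<open>p - \<alpha> \<ge> 1\<close> until the product falls into the bottom
  layer, and from then on each factor pushes the first coordinate towards that of \<open>\<bottom>\<close>. So every
  proper filter lies in \<open>T\<close>, \<open>T\<close> is the only maximal filter and \<open>Rad = T\<close>. For \<open>x \<in> T\<close> the
  element \<open>\<sim>x\<close> lies in the bottom layer, so \<open>(n + 1).x = \<sim>((\<sim>x)\<^sup>n\<^sup>+\<^sup>1) = \<top>\<close>. Hence \<open>t\<^sub>n\<^sub>p\<close> is
  \<open>\<top>\<close> on \<open>T\<close> and \<open>\<bottom>\<close> off \<open>T\<close>, which gives (a) and (b). For (c), either \<open>a \<in> T\<close> or
  \<open>\<sim>(a\<^sup>p) \<in> T\<close>, and a join with an element of \<open>T\<close> stays in \<open>T\<close>.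
\<close>

lemma lex_le_eq [simp]: "lex_le = (\<le>)"
  by (auto simp: fun_eq_iff lex_le_def less_eq_prod_def)

lemma lmin_eq [simp]: "lmin = min" and lmax_eq [simp]: "lmax = max"
  by (auto simp: fun_eq_iff lmin_def lmax_def min_def max_def)

lemma zadd_Pair [simp]: "zadd (a, b) (c, d) = (a + c, b + d)"
  and zsub_Pair [simp]: "zsub (a, b) (c, d) = (a - c, b - d)"
  by (simp_all add: zadd_def zsub_def)

lemma Acar_snd_bounds: "a \<in> Acar n p \<Longrightarrow> 0 \<le> snd a \<and> snd a \<le> int p"
  by (cases a) (auto simp: Acar_def)

lemma Abot_in_Acar: "Abot n p \<in> Acar n p"
  by (auto simp: Abot_def Acar_def Lw_def)

lemma Abot_neq_Atop: "p \<ge> 1 \<Longrightarrow> Abot n p \<noteq> Atop n p"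
  by (simp add: Abot_def Atop_def)

definition top_layer :: "nat \<Rightarrow> nat \<Rightarrow> elt set" where
  "top_layer n p = {a \<in> Acar n p. snd a = int p}"

lemma Pair_mem_top_layer [simp]: "(x, \<alpha>) \<in> top_layer n p \<longleftrightarrow> x \<in> Lw n \<and> \<alpha> = int p"
  by (auto simp: top_layer_def Acar_def)

lemma Atop_mem_top_layer: "Atop n p \<in> top_layer n p"
  by (simp add: Atop_def Lw_def)

lemma Aneg_Aneg [simp]: "Aneg n p (Aneg n p a) = a"
  by (auto simp: Aneg_def split: prod.splits)

lemma Aneg_Atop [simp]: "Aneg n p (Atop n p) = Abot n p"
  and Aneg_Abot [simp]: "Aneg n p (Abot n p) = Atop n p"
  by (simp_all add: Aneg_def Atop_def Abot_def)

lemma Atimes_eq_Aneg_Apow_Aneg: "Atimes n p k a = Aneg n p (Apow n p (Aneg n p a) k)"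
  by (induction k) (simp_all add: Aoplus_def)

lemma Apow_Atop [simp]: "p \<ge> 1 \<Longrightarrow> Apow n p (Atop n p) k = Atop n p"
  by (induction k) (auto simp: Atop_def Aodot_def Lw_star_def max_def)

lemma Atimes_Abot [simp]: "p \<ge> 1 \<Longrightarrow> Atimes n p k (Abot n p) = Abot n p"
  by (simp add: Atimes_eq_Aneg_Apow_Aneg)

lemma Acar_below_top_layerE:
  assumes "((m, r), \<alpha>) \<in> Acar n p" "\<alpha> \<noteq> int p"
  obtains "\<alpha> = 0" "(0, 0) \<le> (m, r)" "(m, r) \<le> (int n, 0)"
    | "0 < \<alpha>" "\<alpha> < int p" "(0, 0) \<le> (m, r)" "(m, r) \<le> (int n - 1, 0)"
  using assms unfolding Acar_def Lw_def by auto

lemma lex_step_bound: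
  fixes y1 y2 d1 d2 :: int
  assumes "(int (min j n), 0) \<le> (y1, y2)" "(1, 0) \<le> (d1, d2)"
  shows "(int (min (Suc j) n), 0) \<le> min (int n, 0) (y1 + d1, y2 + d2)"
  using assms by auto

lemma Aodot_bottom_layer_step:
  assumes "((m, r), \<alpha>) \<in> Acar n p" "\<alpha> \<noteq> int p"
    and "(int (min j n), 0) \<le> (y1, y2)" "(y1, y2) \<le> (int n, 0)"
  shows "\<exists>y'. Aodot n p ((m, r), \<alpha>) ((y1, y2), 0) = (y', 0)
           \<and> (int (min (Suc j) n), 0) \<le> y' \<and> y' \<le> (int n, 0)"
  using assms(1,2)
proof (cases rule: Acar_below_top_layerE)
  case 1
  then have "Aodot n p ((m, r), \<alpha>) ((y1, y2), 0) = (min (int n, 0) (y1 + (m + 1), y2 + r), 0)"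
    by (simp add: Aodot_def add_ac)
  moreover have "(1, 0) \<le> (m + 1, r)" using 1 by auto
  ultimately show ?thesis using lex_step_bound[OF assms(3), of "m + 1" r] by auto
next
  case 2
  then have "Aodot n p ((m, r), \<alpha>) ((y1, y2), 0) = (min (int n, 0) (y1 + (int n - m), y2 + - r), 0)"
    by (simp add: Aodot_def Lw_impl_def add_ac)
  moreover have "(1, 0) \<le> (int n - m, - r)" using 2 by auto
  ultimately show ?thesis using lex_step_bound[OF assms(3), of "int n - m" "- r"] by auto
qed

lemma Aodot_middle_layer_step:
  assumes "0 < \<alpha>" "\<alpha> < int p" "(0, 0) \<le> (m, r)" "(m, r) \<le> (int n - 1, 0)"
    and "1 \<le> \<beta>" "(0, 0) \<le> w" "w \<le> (int (n - Suc j), 0)"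
  shows "if int p < \<alpha> + \<beta>
    then \<exists>w'. Aodot n p ((m, r), \<alpha>) (w, \<beta>) = (w', \<alpha> + \<beta> - int p)
           \<and> (0, 0) \<le> w' \<and> w' \<le> (int (n - Suc (Suc j)), 0)
    else \<exists>y. Aodot n p ((m, r), \<alpha>) (w, \<beta>) = (y, 0)
           \<and> (int (min (Suc j) n), 0) \<le> y \<and> y \<le> (int n, 0)"
  using assms by (cases w) (auto simp: Aodot_def Lw_star_def)

text \<open>
  In the middle layers each factor lowers the first coordinate by at least one, and this is
  exactly compensated when the product drops to the bottom layer through (P2); so after \<open>k\<close>
  factors a bottom-layer power has first coordinate at least \<open>min (k - 1) n\<close>, however late it
  arrived there.
\<close>

lemma Apow_below_top_layer:
  assumes a: "((m, r), \<alpha>) \<in> Acar n p" "\<alpha> \<noteq> int p"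
  shows "(\<exists>w. Apow n p ((m, r), \<alpha>) (Suc j) = (w, int p - int (Suc j) * (int p - \<alpha>))
            \<and> 1 \<le> int p - int (Suc j) * (int p - \<alpha>) \<and> (0, 0) \<le> w \<and> w \<le> (int (n - Suc j), 0))
       \<or> (\<exists>y. Apow n p ((m, r), \<alpha>) (Suc j) = (y, 0) \<and> (int (min j n), 0) \<le> y \<and> y \<le> (int n, 0))"
proof (induction j)
  case 0
  then show ?case
    using a by (auto simp: Acar_def Lw_def Aodot_def Atop_def Lw_star_def Lw_impl_def)
next
  case (Suc j)
  let ?a = "((m, r), \<alpha>)"
  have \<alpha>_lt: "\<alpha> < int p" using a Acar_snd_bounds[OF a(1)] by simp
  from Suc show ?case
  proof (elim disjE exE conjE)
    fix w
    define \<beta> where "\<beta> = int p - int (Suc j) * (int p - \<alpha>)"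
    assume pow: "Apow n p ?a (Suc j) = (w, int p - int (Suc j) * (int p - \<alpha>))"
      and \<beta>_pos: "1 \<le> int p - int (Suc j) * (int p - \<alpha>)"
      and w: "(0, 0) \<le> w" "w \<le> (int (n - Suc j), 0)"
    have "int p - \<alpha> \<le> int (Suc j) * (int p - \<alpha>)" using \<alpha>_lt by simp
    with \<beta>_pos have "0 < \<alpha>" by linarith
    then have mid: "(0, 0) \<le> (m, r)" "(m, r) \<le> (int n - 1, 0)"
      using a \<alpha>_lt by (auto simp: Acar_def Lw_def)
    have next_layer: "\<alpha> + \<beta> - int p = int p - int (Suc (Suc j)) * (int p - \<alpha>)"
      by (simp add: \<beta>_def algebra_simps)
    have step: "Apow n p ?a (Suc (Suc j)) = Aodot n p ?a (w, \<beta>)"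
      using pow by (simp add: \<beta>_def)
    have "1 \<le> \<beta>" using \<beta>_pos by (simp add: \<beta>_def)
    note next_step = Aodot_middle_layer_step[OF \<open>0 < \<alpha>\<close> \<alpha>_lt mid this w]
    show ?case
    proof (cases "int p < \<alpha> + \<beta>")
      case True
      with next_step obtain w' where "Aodot n p ?a (w, \<beta>) = (w', \<alpha> + \<beta> - int p)"
        "(0, 0) \<le> w'" "w' \<le> (int (n - Suc (Suc j)), 0)"
        by (simp only: if_True) blast
      with True show ?thesis
        unfolding step next_layer[symmetric] by auto
    next
      case False
      with next_step obtain y where "Aodot n p ?a (w, \<beta>) = (y, 0)"
        "(int (min (Suc j) n), 0) \<le> y" "y \<le> (int n, 0)"
        by (simp only: if_False) blast
      then show ?thesis unfolding step by blast
    qed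
  next
    fix y
    assume "Apow n p ?a (Suc j) = (y, 0)" "(int (min j n), 0) \<le> y" "y \<le> (int n, 0)"
    then show ?case using Aodot_bottom_layer_step[OF a, of j "fst y" "snd y"] by simp
  qed
qed

lemma Apow_enters_bottom_layer:
  assumes "a \<in> Acar n p" "snd a \<noteq> int p" "1 \<le> k" "int p \<le> int k * (int p - snd a)"
  shows "\<exists>y. Apow n p a k = (y, 0) \<and> (int (min (k - 1) n), 0) \<le> y \<and> y \<le> (int n, 0)"
proof -
  obtain m r \<alpha> j where a: "a = ((m, r), \<alpha>)" and k: "k = Suc j"
    using assms(3) by (metis not0_implies_Suc not_one_le_zero prod.collapse)
  show ?thesis
    using Apow_below_top_layer[of m r \<alpha> n p j] assms a k by auto
qed

lemma Apow_off_top_layer: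
  assumes "p \<ge> 1" "a \<in> Acar n p" "a \<notin> top_layer n p" "p \<le> k"
  shows "\<exists>y. Apow n p a k = (y, 0) \<and> (int (min (k - 1) n), 0) \<le> y \<and> y \<le> (int n, 0)"
proof -
  have "snd a < int p"
    using Acar_snd_bounds[OF assms(2)] assms(2,3) by (simp add: top_layer_def)
  have "int p \<le> int k" using assms(4) by simp
  also have "\<dots> \<le> int k * (int p - snd a)"
    using \<open>snd a < int p\<close> by (simp add: mult_le_cancel_left1)
  finally show ?thesis
    using Apow_enters_bottom_layer[OF assms(2)] \<open>snd a < int p\<close> assms(1,4) by simp
qed

lemma Apow_eq_Abot_of_bottom_bound:
  assumes "Apow n p a k = (y, 0)" "(int (min (k - 1) n), 0) \<le> y" "y \<le> (int n, 0)" "n + 1 \<le> k"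
  shows "Apow n p a k = Abot n p"
proof -
  have "y = (int n, 0)"
    using assms(2-4) by (intro order_antisym) (simp_all add: min_absorb2)
  then show ?thesis using assms(1) by (simp add: Abot_def)
qed

lemma Apow_eq_Abot:
  assumes "p \<ge> 1" "a \<in> Acar n p" "a \<notin> top_layer n p" "n + 1 \<le> k" "p \<le> k"
  shows "Apow n p a k = Abot n p"
  using Apow_off_top_layer[OF assms(1-3,5)] Apow_eq_Abot_of_bottom_bound assms(4) by blast

lemma Apow_bottom_layer_eq_Abot:
  assumes "p \<ge> 1" "x \<in> Lw n"
  shows "Apow n p (x, 0) (n + 1) = Abot n p"
proof -
  have "(x, 0) \<in> Acar n p" using assms(2) by (auto simp: Acar_def)
  moreover have "int p \<le> int (n + 1) * (int p - snd (x, 0))" by (simp add: algebra_simps)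
  ultimately obtain y where "Apow n p (x, 0) (n + 1) = (y, 0)"
    "(int (min (n + 1 - 1) n), 0) \<le> y" "y \<le> (int n, 0)"
    using Apow_enters_bottom_layer[of "(x, 0)" n p "n + 1"] assms(1) by auto
  then show ?thesis by (rule Apow_eq_Abot_of_bottom_bound) simp
qed

lemma Aodot_top_layer:
  assumes "p \<ge> 1" "a \<in> top_layer n p" "b \<in> top_layer n p"
  shows "Aodot n p a b \<in> top_layer n p"
proof -
  obtain x1 x2 y1 y2 where "a = ((x1, x2), int p)" "b = ((y1, y2), int p)"
    "(x1, x2) \<in> Lw n" "(y1, y2) \<in> Lw n"
    using assms(2,3) by (cases a, cases b) auto
  then show ?thesis
    using assms(1) by (auto simp: Lw_def Aodot_def Lw_star_def le_max_iff_disj)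
qed

lemma Atimes_top_layer:
  assumes "p \<ge> 1" "a \<in> top_layer n p"
  shows "Atimes n p (n + 1) a = Atop n p"
proof -
  obtain x where "a = (x, int p)" "x \<in> Lw n" using assms(2) by (cases a) auto
  then have "Aneg n p a = (x, 0)" by (simp add: Aneg_def)
  then show ?thesis
    using Apow_bottom_layer_eq_Abot[OF assms(1) \<open>x \<in> Lw n\<close>]
    by (simp add: Atimes_eq_Aneg_Apow_Aneg)
qed

lemma impl_filter_Apow: "impl_filter n p F \<Longrightarrow> a \<in> F \<Longrightarrow> Apow n p a k \<in> F"
  by (induction k) (auto simp: impl_filter_def)

lemma Abot_least: "b \<in> Acar n p \<Longrightarrow> Ale n p (Abot n p) b"
  by (cases b) (auto simp: Acar_def Abot_def Ale_def Lw_def)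

lemma Ale_from_top_layer:
  assumes "p \<ge> 1" "b \<in> Acar n p" "Ale n p (x, int p) b"
  shows "\<exists>y. b = (y, int p) \<and> x \<le> y"
  using assms by (cases b) (auto simp: Acar_def Ale_def)

lemma impl_filter_top_layer: "p \<ge> 1 \<Longrightarrow> impl_filter n p (top_layer n p)"
  using Atop_mem_top_layer Aodot_top_layer Ale_from_top_layer
  by (fastforce simp: impl_filter_def top_layer_def)

lemma Apow_top_layer: "p \<ge> 1 \<Longrightarrow> a \<in> top_layer n p \<Longrightarrow> Apow n p a k \<in> top_layer n p"
  using impl_filter_Apow[OF impl_filter_top_layer] .

lemma Atimes_Apow_top_layer:
  assumes "p \<ge> 1" "a \<in> top_layer n p"
  shows "Atimes n p (n + 1) (Apow n p a k) = Atop n p"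
  using Atimes_top_layer[OF assms(1) Apow_top_layer[OF assms]] .

text \<open>A power of an element outside the top layer is \<open>\<bottom>\<close>, and a filter containing \<open>\<bottom>\<close> is improper.\<close>

lemma proper_impl_filter_subset_top_layer:
  assumes "p \<ge> 1" "impl_filter n p F" "F \<noteq> Acar n p"
  shows "F \<subseteq> top_layer n p"
proof
  fix a assume "a \<in> F"
  have "Abot n p \<notin> F"
    using assms(2,3) Abot_least by (auto simp: impl_filter_def)
  moreover have "a \<in> Acar n p" using \<open>a \<in> F\<close> assms(2) by (auto simp: impl_filter_def)
  ultimately show "a \<in> top_layer n p"
    using impl_filter_Apow[OF assms(2) \<open>a \<in> F\<close>, of "max (n + 1) p"] Apow_eq_Abot[OF assms(1)]
    by fastforce
qed

lemma max_filter_iff_top_layer: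
  assumes "p \<ge> 1"
  shows "max_filter n p F \<longleftrightarrow> F = top_layer n p"
proof -
  have "Abot n p \<notin> top_layer n p" using assms by (simp add: Abot_def)
  then have proper: "top_layer n p \<noteq> Acar n p" using Abot_in_Acar by blast
  show ?thesis
    using proper impl_filter_top_layer[OF assms] proper_impl_filter_subset_top_layer[OF assms]
    unfolding max_filter_def by blast
qed

lemma Rad_eq_top_layer: "p \<ge> 1 \<Longrightarrow> Rad n p = top_layer n p"
  by (auto simp: Rad_def max_filter_iff_top_layer top_layer_def)

lemma Ale_antisym:
  assumes "a \<in> Acar n p" "b \<in> Acar n p" "Ale n p a b" "Ale n p b a"
  shows "a = b"
  using assms by (cases a, cases b) (auto simp: Ale_def Acar_def)

lemma Ajoin_eqI:
  assumes "c \<in> Acar n p" "Ale n p a c" "Ale n p b c"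
    and "\<And>d. d \<in> Acar n p \<Longrightarrow> Ale n p a d \<Longrightarrow> Ale n p b d \<Longrightarrow> Ale n p c d"
  shows "Ajoin n p a b = c"
  unfolding Ajoin_def
proof (rule the_equality)
  fix c' assume "c' \<in> Acar n p \<and> Ale n p a c' \<and> Ale n p b c' \<and>
      (\<forall>d\<in>Acar n p. Ale n p a d \<and> Ale n p b d \<longrightarrow> Ale n p c' d)"
  with assms show "c' = c" by (blast intro: Ale_antisym)
qed (use assms in blast)

lemma Ajoin_commute: "Ajoin n p a b = Ajoin n p b a"
  unfolding Ajoin_def by (simp only: conj_ac)

text \<open>For the bottom layer the bound comes from condition (o3).\<close>

definition top_bound :: "nat \<Rightarrow> elt \<Rightarrow> zz" where
  "top_bound n a = (case a of ((m, r), \<alpha>) \<Rightarrow> if \<alpha> = 0 then (int n - 1 - m, - r) else (m, r))"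

lemma Ale_top_layer_iff:
  assumes "p \<ge> 1" "a \<in> Acar n p"
  shows "Ale n p a (y, int p) \<longleftrightarrow> top_bound n a \<le> y"
  using assms by (cases y) (auto simp: Ale_def Acar_def top_bound_def split: prod.splits)

lemma top_bound_le: "a \<in> Acar n p \<Longrightarrow> top_bound n a \<le> (int n, 0)"
  by (auto simp: Acar_def Lw_def top_bound_def split: prod.splits)

lemma Ajoin_top_layer:
  assumes "p \<ge> 1" "a \<in> Acar n p" "z \<in> Lw n"
  shows "Ajoin n p a (z, int p) = (max z (top_bound n a), int p)"
proof (rule Ajoin_eqI)
  show "(max z (top_bound n a), int p) \<in> Acar n p"
    using assms(3) top_bound_le[OF assms(2)] by (auto simp: Acar_def Lw_def le_max_iff_disj)
  show "Ale n p a (max z (top_bound n a), int p)"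
    using Ale_top_layer_iff[OF assms(1,2)] by simp
  show "Ale n p (z, int p) (max z (top_bound n a), int p)"
    using assms(1) by (simp add: Ale_def)
  fix d assume d: "d \<in> Acar n p" "Ale n p a d" "Ale n p (z, int p) d"
  then obtain y where "d = (y, int p)" "z \<le> y"
    using Ale_from_top_layer[OF assms(1)] by blast
  then show "Ale n p (max z (top_bound n a), int p) d"
    using d(2) Ale_top_layer_iff[OF assms(1,2)] assms(1) by (simp add: Ale_def)
qed

lemma Ajoin_mem_top_layer:
  assumes "p \<ge> 1" "a \<in> Acar n p" "b \<in> top_layer n p"
  shows "Ajoin n p a b \<in> top_layer n p"
proof -
  obtain z where "b = (z, int p)" "z \<in> Lw n" using assms(3) by (cases b) auto
  then show ?thesis
    using Ajoin_top_layer[OF assms(1,2)] assms(3) top_bound_le[OF assms(2)]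
    by (auto simp: Lw_def le_max_iff_disj)
qed

lemma t_np_top_layer:
  assumes "p \<ge> 1" "a \<in> top_layer n p"
  shows "t_np n p a = Atop n p"
  using Atimes_Apow_top_layer[OF assms] by (simp add: t_np_def)

lemma t_np_off_top_layer:
  assumes "p \<ge> 1" "a \<in> Acar n p" "a \<notin> top_layer n p"
  shows "t_np n p a = Abot n p"
proof -
  have "Apow n p a (max (n + 1) p) = Abot n p" using Apow_eq_Abot[OF assms] by simp
  then show ?thesis using assms(1) by (simp add: t_np_def del: Atimes.simps)
qed

lemma t_np_eq_Atop_iff: "p \<ge> 1 \<Longrightarrow> a \<in> Acar n p \<Longrightarrow> t_np n p a = Atop n p \<longleftrightarrow> a \<in> top_layer n p"
  using t_np_top_layer t_np_off_top_layer Abot_neq_Atop by metis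

lemma Ajoin_Abot_Atop: "p \<ge> 1 \<Longrightarrow> Ajoin n p (Abot n p) (Atop n p) = Atop n p"
  using Ajoin_top_layer[OF _ Abot_in_Acar, of p "(int n, 0)" n]
  by (simp add: Atop_def Abot_def top_bound_def Lw_def)

lemma t_np_excluded_middle:
  assumes "p \<ge> 1" "a \<in> Acar n p"
  shows "Ajoin n p (t_np n p a) (Aneg n p (t_np n p a)) = Atop n p"
  using t_np_top_layer[OF assms(1)] t_np_off_top_layer[OF assms] Ajoin_Abot_Atop[OF assms(1)]
  by (cases "a \<in> top_layer n p") (simp_all add: Ajoin_commute)

lemma Ajoin_Aneg_Apow_mem_top_layer:
  assumes "p \<ge> 1" "a \<in> Acar n p"
  shows "Ajoin n p a (Aneg n p (Apow n p a p)) \<in> top_layer n p"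
proof (cases "a \<in> top_layer n p")
  case True
  then obtain x where "Apow n p a p = (x, int p)" "x \<in> Lw n"
    using Apow_top_layer[OF assms(1)] by (cases "Apow n p a p") (metis Pair_mem_top_layer)
  then have "Aneg n p (Apow n p a p) \<in> Acar n p" by (simp add: Aneg_def Acar_def)
  then show ?thesis
    using Ajoin_mem_top_layer[OF assms(1) _ True] Ajoin_commute by metis
next
  case False
  then obtain y where "Apow n p a p = (y, 0)" "(0, 0) \<le> y" "y \<le> (int n, 0)"
    using Apow_off_top_layer[OF assms False] by fastforce
  then have "Aneg n p (Apow n p a p) \<in> top_layer n p" by (simp add: Aneg_def Lw_def)
  then show ?thesis using Ajoin_mem_top_layer[OF assms] by blast
qed

lemma t_np_eq_Atop_set: "p \<ge> 1 \<Longrightarrow> {a \<in> Acar n p. t_np n p a = Atop n p} = top_layer n p"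
  using t_np_eq_Atop_iff by (auto simp: top_layer_def)

lemma Atimes_Apow_eq_Atop_set:
  assumes "p \<ge> 1"
  shows "{a \<in> Acar n p. \<forall>k>0. Atimes n p (n + 1) (Apow n p a k) = Atop n p} = top_layer n p"
proof (intro equalityI subsetI)
  fix a assume a: "a \<in> {a \<in> Acar n p. \<forall>k>0. Atimes n p (n + 1) (Apow n p a k) = Atop n p}"
  then have "t_np n p a = Atop n p" by (simp add: t_np_def del: Atimes.simps)
  then show "a \<in> top_layer n p" using a t_np_eq_Atop_iff[OF assms] by blast
next
  fix a assume "a \<in> top_layer n p"
  then show "a \<in> {a \<in> Acar n p. \<forall>k>0. Atimes n p (n + 1) (Apow n p a k) = Atop n p}"
    using Atimes_Apow_top_layer[OF assms] by (auto simp: top_layer_def)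
qed

theorem theorem3p6:
  fixes n p :: nat
  assumes "n \<ge> 1" and "p \<ge> 1"
  shows "(\<forall>a\<in>Acar n p. Ajoin n p (t_np n p a) (Aneg n p (t_np n p a)) = Atop n p)
    \<and> Rad n p = {a \<in> Acar n p. t_np n p a = Atop n p}
    \<and> {a \<in> Acar n p. t_np n p a = Atop n p}
        = {a \<in> Acar n p. \<forall>k::nat. k > 0 \<longrightarrow> Atimes n p (n + 1) (Apow n p a k) = Atop n p}
    \<and> (\<forall>k::nat. k > 0 \<longrightarrow> (\<forall>a\<in>Acar n p.
         Atimes n p (n + 1) (Apow n p (Ajoin n p a (Aneg n p (Apow n p a p))) k) = Atop n p))"
proof (intro conjI)
  show "\<forall>a\<in>Acar n p. Ajoin n p (t_np n p a) (Aneg n p (t_np n p a)) = Atop n p"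
    using t_np_excluded_middle[OF assms(2)] by blast
  show "Rad n p = {a \<in> Acar n p. t_np n p a = Atop n p}"
    using Rad_eq_top_layer[OF assms(2)] t_np_eq_Atop_set[OF assms(2)] by simp
  show "{a \<in> Acar n p. t_np n p a = Atop n p}
      = {a \<in> Acar n p. \<forall>k>0. Atimes n p (n + 1) (Apow n p a k) = Atop n p}"
    using t_np_eq_Atop_set[OF assms(2)] Atimes_Apow_eq_Atop_set[OF assms(2)] by simp
  show "\<forall>k>0. \<forall>a\<in>Acar n p.
      Atimes n p (n + 1) (Apow n p (Ajoin n p a (Aneg n p (Apow n p a p))) k) = Atop n p"
    using Ajoin_Aneg_Apow_mem_top_layer[OF assms(2)] Atimes_Apow_top_layer[OF assms(2)] by blast
qed

end
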